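(* Let $b\ge 2$ and let $N$ be a $b$-wARH number with $k$ base-$b$ digits and with additive extra term $A$. Then $k\le A+4$.
   Context: Fix a base $b\ge 2$. $s_b(N)$ is the sum of the base-$b$ digits of $N$. For a positive integer $X$, its reversal $X^R$ is the integer whose base-$b$ representation is that of $X$ written in reverse order (leading zeros of the result are dropped). A positive integer $N$ is a $b$-wARH number if there exists an integer $A\ge 0$, called an additive extra term of $N$, such that $N=(A+s_b(N))+(A+s_b(N))^R$. *)

theory Defs
  imports Main
begin

fun digits :: "nat \<Rightarrow> nat \<Rightarrow> nat list" where
  "digits b n = (if b < 2 \<or> n = 0 then [] else n mod b # digits b (n div b))"

declare digits.simps[simp del]

fun from_digits :: "nat \<Rightarrow> nat list \<Rightarrow> nat" where
  "from_digits b [] = 0"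
| "from_digits b (d # ds) = d + b * from_digits b ds"

definition digit_sum :: "nat \<Rightarrow> nat \<Rightarrow> nat" where
  "digit_sum b n = sum_list (digits b n)"

text \<open>Reversal: the number whose base-b representation is that of n written backwards
  (leading zeros of the result drop out automatically).\<close>
definition rev_num :: "nat \<Rightarrow> nat \<Rightarrow> nat" where
  "rev_num b n = from_digits b (rev (digits b n))"

definition num_digits :: "nat \<Rightarrow> nat \<Rightarrow> nat" where
  "num_digits b n = length (digits b n)"

definition is_additive_extra_term :: "nat \<Rightarrow> nat \<Rightarrow> nat \<Rightarrow> bool" where
  "is_additive_extra_term b N A \<longleftrightarrow>
     N = (A + digit_sum b N) + rev_num b (A + digit_sum b N)"

definition is_wARH :: "nat \<Rightarrow> nat \<Rightarrow> bool" where
  "is_wARH b N \<longleftrightarrow> N > 0 \<and> (\<exists>A. is_additive_extra_term b N A)"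

end

theory Submission
  imports Defs
begin

text \<open>Put \<open>M = A + s_b(N)\<close> and let \<open>m\<close> be its number of digits. Since both \<open>M\<close> and \<open>M\<^sup>R\<close> are
  below \<open>b\<^sup>m\<close>, \<open>N = M + M\<^sup>R\<close> has \<open>k \<le> m + 1\<close> digits. On the other hand
  \<open>b\<^sup>m\<^sup>-\<^sup>1 \<le> M \<le> A + (b - 1) k \<le> A + (b - 1)(m + 1)\<close>, and if \<open>k > A + 4\<close> then \<open>m \<ge> A + 4\<close>, so the
  exponential left-hand side would be dominated by a linear function of \<open>m\<close>, which fails
  for \<open>m \<ge> 4\<close>.\<close>

lemma digits_0 [simp]: "digits b 0 = []"
  by (simp add: digits.simps)

lemma digits_pos:
  "b \<ge> 2 \<Longrightarrow> n > 0 \<Longrightarrow> digits b n = n mod b # digits b (n div b)"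
  by (simp add: digits.simps)

lemma digits_less_base: "d \<in> set (digits b n) \<Longrightarrow> d < b"
proof (induction b n rule: digits.induct)
  case (1 b n)
  then show ?case
    by (cases "b < 2 \<or> n = 0") (auto simp: digits.simps[of b n])
qed

lemma less_power_num_digits: "b \<ge> 2 \<Longrightarrow> n < b ^ num_digits b n"
  unfolding num_digits_def
proof (induction b n rule: digits.induct)
  case (1 b n)
  show ?case
  proof (cases "n = 0")
    case False
    then have "n div b < b ^ length (digits b (n div b))"
      using 1 by auto
    then have "b * (n div b) + b \<le> b * b ^ length (digits b (n div b))"
      by (metis Suc_leI add.commute mult_Suc_right mult_le_mono2)
    moreover have "n < b * (n div b) + b"
      using mult_div_mod_eq[of b n] mod_less_divisor[of b n] 1 by linarith
    ultimately show ?thesis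
      using False 1 by (simp add: digits_pos)
  qed simp
qed

lemma power_num_digits_le: "b \<ge> 2 \<Longrightarrow> n > 0 \<Longrightarrow> b ^ (num_digits b n - 1) \<le> n"
  unfolding num_digits_def
proof (induction b n rule: digits.induct)
  case (1 b n)
  show ?case
  proof (cases "n div b = 0")
    case True
    then show ?thesis
      using 1 by (simp add: digits_pos)
  next
    case False
    define L where "L = length (digits b (n div b))"
    have "L > 0"
      using False 1 by (simp add: L_def digits_pos)
    have "b ^ (length (digits b n) - 1) = b * b ^ (L - 1)"
      using 1 \<open>L > 0\<close> by (simp add: L_def digits_pos power_eq_if)
    also have "\<dots> \<le> b * (n div b)"
      using 1 False by (simp add: L_def)
    also have "\<dots> \<le> n"
      by simp
    finally show ?thesis .
  qed
qed

lemma num_digits_le_of_less_power: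
  assumes "b \<ge> 2" "n < b ^ j"
  shows "num_digits b n \<le> j"
proof (cases "n = 0")
  case True
  then show ?thesis by (simp add: num_digits_def)
next
  case False
  then have "b ^ (num_digits b n - 1) < b ^ j"
    using power_num_digits_le[OF assms(1)] assms(2) by (meson le_less_trans not_gr_zero)
  then have "num_digits b n - 1 < j"
    using assms(1) power_less_imp_less_exp by (metis One_nat_def Suc_1 Suc_le_lessD)
  moreover have "num_digits b n > 0"
    using False assms(1) by (simp add: num_digits_def digits_pos)
  ultimately show ?thesis by simp
qed

lemma from_digits_less_power:
  "\<forall>d\<in>set ds. d < b \<Longrightarrow> from_digits b ds < b ^ length ds"
proof (induction ds)
  case (Cons d ds)
  then have "d + b * from_digits b ds < b * Suc (from_digits b ds)"
    by simp
  also have "\<dots> \<le> b * b ^ length ds"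
    using Cons by (intro mult_le_mono2) (simp add: Suc_leI)
  finally show ?case by simp
qed simp

lemma rev_num_less_power: "rev_num b n < b ^ num_digits b n"
  unfolding rev_num_def num_digits_def
  using from_digits_less_power[of "rev (digits b n)" b] digits_less_base by fastforce

lemma num_digits_add_rev_num_le:
  assumes "b \<ge> 2"
  shows "num_digits b (n + rev_num b n) \<le> num_digits b n + 1"
proof (rule num_digits_le_of_less_power[OF assms])
  have "n + rev_num b n < 2 * b ^ num_digits b n"
    using less_power_num_digits[OF assms, of n] rev_num_less_power[of b n] by simp
  also have "\<dots> \<le> b ^ (num_digits b n + 1)"
    using assms by simp
  finally show "n + rev_num b n < b ^ (num_digits b n + 1)" .
qed

lemma digit_sum_le: "digit_sum b n \<le> (b - 1) * num_digits b n"
proof -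
  have "sum_list (digits b n) \<le> (\<Sum>d\<leftarrow>digits b n. b - 1)"
    using sum_list_mono[of "digits b n" "\<lambda>d. d" "\<lambda>_. b - 1"] digits_less_base by fastforce
  then show ?thesis
    by (simp add: digit_sum_def num_digits_def sum_list_triv mult.commute)
qed

lemma linear_less_power:
  assumes "b \<ge> 2" "n \<ge> 3"
  shows "b * (n + 2) < b ^ n + 5"
  using assms(2)
proof (induction n rule: dec_induct)
  case base
  show ?case
  proof (cases "b = 2")
    case False
    then have "5 < b * b"
      using assms(1) mult_le_mono[of 3 b 3 b] by simp
    then have "b * 5 < b ^ 3"
      using assms(1) by (simp add: power3_eq_cube)
    then show ?thesis by simp
  qed simp
next
  case (step n)
  have "b ^ n \<ge> b"
    using assms(1) step(1) by (simp add: self_le_power)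
  then have "b ^ n + b \<le> 2 * b ^ n"
    by simp
  also have "\<dots> \<le> b ^ Suc n"
    using assms(1) by (simp add: mult_le_mono1)
  finally show ?case
    using step(3) by simp
qed

theorem mainTheorem17:
  fixes b N A k :: nat
  assumes "b \<ge> 2"
    and "is_wARH b N"
    and "is_additive_extra_term b N A"
    and "num_digits b N = k"
  shows "k \<le> A + 4"
proof (rule ccontr)
  assume "\<not> k \<le> A + 4"
  define M where "M = A + digit_sum b N"
  define m where "m = num_digits b M"
  have "N = M + rev_num b M"
    using assms(3) by (simp add: M_def is_additive_extra_term_def)
  then have "k \<le> m + 1"
    using num_digits_add_rev_num_le[OF assms(1), of M] assms(4) by (simp add: m_def)
  with \<open>\<not> k \<le> A + 4\<close> have "m \<ge> A + 4" by simp
  then have "M > 0"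
    by (cases "M = 0") (simp_all add: m_def num_digits_def)
  have "b ^ (m - 1) \<le> M"
    using power_num_digits_le[OF assms(1) \<open>M > 0\<close>] by (simp add: m_def)
  moreover have "M \<le> A + (b - 1) * (m + 1)"
    using digit_sum_le[of b N] mult_le_mono2[OF \<open>k \<le> m + 1\<close>, of "b - 1"] assms(4)
    by (simp add: M_def)
  moreover have "(b - 1) * (m + 1) + (m + 1) = b * (m + 1)"
    using assms(1) by (cases b) simp_all
  moreover have "b * (m + 1) < b ^ (m - 1) + 5"
    using linear_less_power[OF assms(1), of "m - 1"] \<open>m \<ge> A + 4\<close>
    by (simp add: Suc_diff_le)
  ultimately show False
    using \<open>m \<ge> A + 4\<close> by linarith
qed

end
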